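(* There is no LCL problem on paths with mending radius between $\omega(1)$ and $o(n)$: if an LCL problem $\Pi$ on the family of all paths is $T$-mendable for some function $T$ with $T(n)=o(n)$, then $\Pi$ is $T'$-mendable for some constant function $T'$.
   Context: A locally verifiable problem $\Pi$ on a graph family $\mathcal{G}$ is given by a set $\Sigma$ of input labels, a set $\Gamma$ of output labels and a verifier $\psi$ with verification radius $r$: $\psi(G,\lambda,v)\in\{\text{happy},\text{unhappy}\}$ depends only on the radius-$r$ neighborhood of $v$ (structure, inputs and outputs, up to isomorphism); $\lambda:V\to\Gamma$ is a solution if $\psi$ is happy everywhere. $\Pi$ is an LCL problem if $\Sigma,\Gamma$ are finite and all graphs in $\mathcal{G}$ have maximum degree bounded by a constant. Partial labelings are maps $\lambda:V\to\Gamma\cup\{\bot\}$; the relaxed verifier $\psi^*$ is happy at $v$ if some node within distance $r$ of $v$ has label $\bot$, and otherwise $\psi^*(G,\lambda,v)=\psi(G,\lambda',v)$ for any $\lambda':V\to\Gamma$ agreeing with $\lambda$ on the radius-$r$ neighborhood of $v$; $\psi^*$ accepts $\lambda$ if happy everywhere. Given $\lambda$ accepted by $\psi^*$ and node $v$, a $t$-mend of $\lambda$ at $v$ is a partial labeling $\mu$ accepted by $\psi^*$ with $\mu(v)\neq\bot$, $\mu(u)=\bot\Rightarrow\lambda(u)=\bot$, and $\mu(u)\neq\lambda(u)\Rightarrow\mathrm{dist}(u,v)\le t$. A verifier is $T$-mendable if for every $G\in\mathcal{G}$ with $n$ nodes, every $\lambda$ accepted by $\psi^*$ and every node $v$, a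 $T(n)$-mend at $v$ exists; $\Pi$ is $T$-mendable if some radius-$r$ verifier for $\Pi$ (accepting exactly the solutions of $\Pi$) is $T$-mendable. *)

theory Defs
  imports Complex_Main "HOL-Library.Landau_Symbols"
begin

text \<open>
  A path with n nodes is represented
  by the vertex set {0..<n} with edges {i, i+1}.  Input labels have type 'i,
  output labels type 'o (both finite: the LCL finiteness condition; the degree
  bound is automatic on paths).  An input labeling is a map nat => 'i, an output
  labeling a map nat => 'o (values outside {0..<n} are irrelevant).

  The radius-r view of node v is the labelled radius-r neighbourhood of v,
  written as a function of the offset d (with |d| <= r) from v; None means that
  there is no node at offset d.  A verifier of radius r is a predicate on views
  that only reads offsets |d| <= r and is invariant under reflecting the path
  (the only nontrivial isomorphism of rooted paths), i.e. it depends only on the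
  radius-r neighbourhood up to isomorphism.
\<close>

definition view ::
  "nat \<Rightarrow> nat \<Rightarrow> (nat \<Rightarrow> 'i) \<Rightarrow> (nat \<Rightarrow> 'o) \<Rightarrow> nat \<Rightarrow> int \<Rightarrow> ('i \<times> 'o) option" where
  "view r n inp lab v = (\<lambda>d. if \<bar>d\<bar> \<le> int r \<and> 0 \<le> int v + d \<and> int v + d < int n
      then Some (inp (nat (int v + d)), lab (nat (int v + d))) else None)"

definition path_verifier :: "nat \<Rightarrow> ((int \<Rightarrow> ('i \<times> 'o) option) \<Rightarrow> bool) \<Rightarrow> bool" where
  "path_verifier r \<psi> \<longleftrightarrow>
     (\<forall>V W. (\<forall>d. \<bar>d\<bar> \<le> int r \<longrightarrow> V d = W d) \<longrightarrow> \<psi> V = \<psi> W) \<and>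
     (\<forall>V. \<psi> (\<lambda>d. V (- d)) = \<psi> V)"

definition accepts ::
  "nat \<Rightarrow> ((int \<Rightarrow> ('i \<times> 'o) option) \<Rightarrow> bool) \<Rightarrow> nat \<Rightarrow> (nat \<Rightarrow> 'i) \<Rightarrow> (nat \<Rightarrow> 'o) \<Rightarrow> bool" where
  "accepts r \<psi> n inp lab \<longleftrightarrow> (\<forall>v<n. \<psi> (view r n inp lab v))"

definition pdist :: "nat \<Rightarrow> nat \<Rightarrow> nat" where
  "pdist u v = (if u \<le> v then v - u else u - v)"

text \<open>Relaxed verifier psi* on partial labelings (None = bottom).\<close>
definition relaxed_happy ::
  "nat \<Rightarrow> ((int \<Rightarrow> ('i \<times> 'o) option) \<Rightarrow> bool) \<Rightarrow> nat \<Rightarrow> (nat \<Rightarrow> 'i) \<Rightarrow> (nat \<Rightarrow> 'o option) \<Rightarrow> nat \<Rightarrow> bool" where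
  "relaxed_happy r \<psi> n inp plab v \<longleftrightarrow>
     (\<exists>u<n. pdist u v \<le> r \<and> plab u = None) \<or> \<psi> (view r n inp (\<lambda>u. the (plab u)) v)"

definition relaxed_accepts ::
  "nat \<Rightarrow> ((int \<Rightarrow> ('i \<times> 'o) option) \<Rightarrow> bool) \<Rightarrow> nat \<Rightarrow> (nat \<Rightarrow> 'i) \<Rightarrow> (nat \<Rightarrow> 'o option) \<Rightarrow> bool" where
  "relaxed_accepts r \<psi> n inp plab \<longleftrightarrow> (\<forall>v<n. relaxed_happy r \<psi> n inp plab v)"

definition is_mend ::
  "nat \<Rightarrow> ((int \<Rightarrow> ('i \<times> 'o) option) \<Rightarrow> bool) \<Rightarrow> nat \<Rightarrow> (nat \<Rightarrow> 'i) \<Rightarrow> (nat \<Rightarrow> 'o option)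
    \<Rightarrow> nat \<Rightarrow> real \<Rightarrow> (nat \<Rightarrow> 'o option) \<Rightarrow> bool" where
  "is_mend r \<psi> n inp plab v t mu \<longleftrightarrow>
     relaxed_accepts r \<psi> n inp mu \<and> mu v \<noteq> None \<and>
     (\<forall>u<n. mu u = None \<longrightarrow> plab u = None) \<and>
     (\<forall>u<n. mu u \<noteq> plab u \<longrightarrow> real (pdist u v) \<le> t)"

definition verifier_mendable ::
  "nat \<Rightarrow> ((int \<Rightarrow> ('i \<times> 'o) option) \<Rightarrow> bool) \<Rightarrow> (nat \<Rightarrow> real) \<Rightarrow> bool" where
  "verifier_mendable r \<psi> T \<longleftrightarrow>
     (\<forall>n inp plab v. relaxed_accepts r \<psi> n inp plab \<longrightarrow> v < n \<longrightarrow>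
        (\<exists>mu. is_mend r \<psi> n inp plab v (T n) mu))"

definition lcl_mendable ::
  "nat \<Rightarrow> ((int \<Rightarrow> ('i::finite \<times> 'o::finite) option) \<Rightarrow> bool) \<Rightarrow> (nat \<Rightarrow> real) \<Rightarrow> bool" where
  "lcl_mendable r \<psi> T \<longleftrightarrow>
     (\<exists>\<psi>'. path_verifier r \<psi>' \<and>
        (\<forall>n inp lab. accepts r \<psi>' n inp lab \<longleftrightarrow> accepts r \<psi> n inp lab) \<and>
        verifier_mendable r \<psi>' T)"

end

theory Submission
  imports Defs
begin

text \<open>
  Since T(m) = o(m), there is an m with 2(T(m) + 2r) + 3 \<le> m. On a path with at least m nodes,
  put v into a window of m consecutive nodes in which v is more than T(m) + 2r away from each end
  of the window that cuts the path. Cut the window out, label its cut ends \<bottom> (so that the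
  relaxed verifier is happy near the cut), mend the resulting m-node instance at v with radius T(m),
  and paste the result back. All changes are more than 2r away from the cuts, so every node whose
  radius-r view contains a change has the same view in the window as in the path, and the pasted
  labeling is still accepted. On paths with fewer than m nodes every mend has radius less than m,
  so the constant m works for all paths.
\<close>

lemma int_pdist: "int (pdist u v) = \<bar>int u - int v\<bar>"
  unfolding pdist_def by auto

lemma relaxed_happy_iff_view:
  "relaxed_happy r \<psi> n inp plab w \<longleftrightarrow>
     (\<exists>d x. view r n inp plab w d = Some (x, None)) \<or>
     \<psi> (\<lambda>d. map_option (\<lambda>(x, y). (x, the y)) (view r n inp plab w d))"
proof -
  have "(\<exists>u<n. pdist u w \<le> r \<and> plab u = None) \<longleftrightarrow>
      (\<exists>d x. view r n inp plab w d = Some (x, None))"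
  proof
    assume "\<exists>u<n. pdist u w \<le> r \<and> plab u = None"
    then obtain u where "u < n" "pdist u w \<le> r" "plab u = None" by blast
    then have "view r n inp plab w (int u - int w) = Some (inp u, None)"
      using int_pdist[of u w] by (simp add: view_def)
    then show "\<exists>d x. view r n inp plab w d = Some (x, None)" by blast
  next
    assume "\<exists>d x. view r n inp plab w d = Some (x, None)"
    then obtain d x where "view r n inp plab w d = Some (x, None)" by blast
    then have "\<bar>d\<bar> \<le> int r" "0 \<le> int w + d" "int w + d < int n"
      "plab (nat (int w + d)) = None"
      by (auto simp: view_def split: if_splits)
    then show "\<exists>u<n. pdist u w \<le> r \<and> plab u = None"
      by (intro exI[of _ "nat (int w + d)"]) (auto simp: pdist_def)
  qed
  moreover have "view r n inp (\<lambda>u. the (plab u)) w =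
      (\<lambda>d. map_option (\<lambda>(x, y). (x, the y)) (view r n inp plab w d))"
    by (auto simp: view_def)
  ultimately show ?thesis
    unfolding relaxed_happy_def by simp
qed

lemma relaxed_happy_cong:
  "view r n inp plab w = view r n' inp' plab' w' \<Longrightarrow>
     relaxed_happy r \<psi> n inp plab w \<longleftrightarrow> relaxed_happy r \<psi> n' inp' plab' w'"
  by (simp add: relaxed_happy_iff_view)

lemma view_cong:
  assumes "\<And>u. u < n \<Longrightarrow> pdist u w \<le> r \<Longrightarrow> lab u = lab' u"
  shows "view r n inp lab w = view r n inp lab' w"
proof
  fix d
  show "view r n inp lab w d = view r n inp lab' w d"
  proof (cases "\<bar>d\<bar> \<le> int r \<and> 0 \<le> int w + d \<and> int w + d < int n")
    case True
    then have "nat (int w + d) < n" "pdist (nat (int w + d)) w \<le> r"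
      using int_pdist[of "nat (int w + d)" w] by linarith+
    with True show ?thesis
      using assms[of "nat (int w + d)"] by (simp add: view_def)
  qed (auto simp: view_def)
qed

lemma pdist_commute: "pdist u v = pdist v u"
  unfolding pdist_def by auto

text \<open>
  Window coordinates: local index i is node s + i of the window {s..<s+m} of a path with n nodes.
  The window has a cut end at index 0 if s > 0 and at index m - 1 if s + m < n.
\<close>

definition far_from_cuts :: "nat \<Rightarrow> nat \<Rightarrow> nat \<Rightarrow> nat \<Rightarrow> nat \<Rightarrow> bool" where
  "far_from_cuts n s m k i \<longleftrightarrow> (0 < s \<longrightarrow> k < i) \<and> (s + m < n \<longrightarrow> i + k < m - 1)"

lemma far_from_cuts_mono:
  "far_from_cuts n s m (k + d) i \<Longrightarrow> pdist j i \<le> d \<Longrightarrow> far_from_cuts n s m k j"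
  unfolding far_from_cuts_def pdist_def by (auto split: if_splits)

lemma far_from_cuts_neighbour:
  assumes "far_from_cuts n s m (k + d) i" "pdist w (s + i) \<le> d" "w < n"
  shows "s \<le> w \<and> w < s + m \<and> far_from_cuts n s m k (w - s)"
  using assms unfolding far_from_cuts_def pdist_def by (auto split: if_splits)

lemma view_in_window:
  assumes "far_from_cuts n s m r j" "j < m" "s + m \<le> n"
  shows "view r m (\<lambda>i. inp (s + i)) (\<lambda>i. lab (s + i)) j = view r n inp lab (s + j)"
proof
  fix d
  show "view r m (\<lambda>i. inp (s + i)) (\<lambda>i. lab (s + i)) j d = view r n inp lab (s + j) d"
  proof (cases "\<bar>d\<bar> \<le> int r")
    case True
    then have "(0 \<le> int j + d \<and> int j + d < int m) \<longleftrightarrow>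
        (0 \<le> int (s + j) + d \<and> int (s + j) + d < int n)"
      using assms unfolding far_from_cuts_def by auto
    moreover have "0 \<le> int j + d \<Longrightarrow> s + nat (int j + d) = nat (int (s + j) + d)"
      by simp
    ultimately show ?thesis
      using True by (auto simp: view_def)
  qed (simp add: view_def)
qed

definition window :: "nat \<Rightarrow> nat \<Rightarrow> nat \<Rightarrow> (nat \<Rightarrow> 'o option) \<Rightarrow> nat \<Rightarrow> 'o option" where
  "window n s m plab i = (if far_from_cuts n s m 0 i then plab (s + i) else None)"

definition glue ::
  "nat \<Rightarrow> nat \<Rightarrow> nat \<Rightarrow> (nat \<Rightarrow> 'o option) \<Rightarrow> (nat \<Rightarrow> 'o option) \<Rightarrow> nat \<Rightarrow> 'o option" where
  "glue n s m plab mu u =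
     (if s \<le> u \<and> u < s + m \<and> far_from_cuts n s m 0 (u - s) then mu (u - s) else plab u)"

lemma glue_changed:
  "glue n s m plab mu u \<noteq> plab u \<Longrightarrow>
     s \<le> u \<and> u - s < m \<and> far_from_cuts n s m 0 (u - s) \<and> mu (u - s) \<noteq> window n s m plab (u - s)"
  by (auto simp: glue_def window_def split: if_splits)

lemma relaxed_accepts_window:
  assumes acc: "relaxed_accepts r \<psi> n inp plab" and sm: "s + m \<le> n"
  shows "relaxed_accepts r \<psi> m (\<lambda>i. inp (s + i)) (window n s m plab)"
  unfolding relaxed_accepts_def
proof (intro allI impI)
  fix j assume j: "j < m"
  show "relaxed_happy r \<psi> m (\<lambda>i. inp (s + i)) (window n s m plab) j"
  proof (cases "far_from_cuts n s m r j")
    case True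
    have "view r m (\<lambda>i. inp (s + i)) (window n s m plab) j =
        view r m (\<lambda>i. inp (s + i)) (\<lambda>i. plab (s + i)) j"
    proof (rule view_cong)
      fix i assume "i < m" "pdist i j \<le> r"
      then show "window n s m plab i = plab (s + i)"
        using far_from_cuts_mono[of n s m 0 r j i] True by (simp add: window_def)
    qed
    also have "\<dots> = view r n inp plab (s + j)"
      using True j sm by (rule view_in_window)
    finally have "relaxed_happy r \<psi> m (\<lambda>i. inp (s + i)) (window n s m plab) j \<longleftrightarrow>
        relaxed_happy r \<psi> n inp plab (s + j)"
      by (rule relaxed_happy_cong)
    moreover have "s + j < n"
      using j sm by simp
    ultimately show ?thesis
      using acc unfolding relaxed_accepts_def by blast
  next
    case False
    define c where "c = (if 0 < s \<and> j \<le> r then 0 else m - 1)"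
    have "c < m" "pdist c j \<le> r" "window n s m plab c = None"
      using False j unfolding c_def window_def far_from_cuts_def pdist_def by auto
    then show ?thesis
      unfolding relaxed_happy_def by blast
  qed
qed

lemma relaxed_accepts_glue:
  assumes acc: "relaxed_accepts r \<psi> n inp plab"
    and acc': "relaxed_accepts r \<psi> m (\<lambda>i. inp (s + i)) mu"
    and sm: "s + m \<le> n"
    and far: "\<And>i. i < m \<Longrightarrow> mu i \<noteq> window n s m plab i \<Longrightarrow> far_from_cuts n s m (r + r) i"
  shows "relaxed_accepts r \<psi> n inp (glue n s m plab mu)"
  unfolding relaxed_accepts_def
proof (intro allI impI)
  fix w assume w: "w < n"
  show "relaxed_happy r \<psi> n inp (glue n s m plab mu) w"
  proof (cases "\<exists>u<n. pdist u w \<le> r \<and> glue n s m plab mu u \<noteq> plab u")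
    case True
    then obtain u where u: "pdist u w \<le> r" "glue n s m plab mu u \<noteq> plab u" by blast
    have "far_from_cuts n s m (r + r) (u - s)" "s + (u - s) = u"
      using glue_changed[OF u(2)] far by auto
    then have sw: "s \<le> w" "w < s + m" and w_far: "far_from_cuts n s m r (w - s)"
      using far_from_cuts_neighbour[of n s m r r "u - s" w] u(1) w by (auto simp: pdist_commute)
    have "view r n inp (glue n s m plab mu) w
        = view r m (\<lambda>i. inp (s + i)) (\<lambda>i. glue n s m plab mu (s + i)) (w - s)"
      using view_in_window[OF w_far _ sm, of inp "glue n s m plab mu"] sw by (simp add: less_diff_conv2)
    also have "\<dots> = view r m (\<lambda>i. inp (s + i)) mu (w - s)"
    proof (rule view_cong)
      fix i assume "i < m" "pdist i (w - s) \<le> r"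
      then show "glue n s m plab mu (s + i) = mu i"
        using far_from_cuts_mono[of n s m 0 r "w - s" i] w_far by (simp add: glue_def)
    qed
    finally have "relaxed_happy r \<psi> n inp (glue n s m plab mu) w \<longleftrightarrow>
        relaxed_happy r \<psi> m (\<lambda>i. inp (s + i)) mu (w - s)"
      by (rule relaxed_happy_cong)
    then show ?thesis
      using acc' sw unfolding relaxed_accepts_def by (simp add: less_diff_conv2)
  next
    case False
    then have "view r n inp (glue n s m plab mu) w = view r n inp plab w"
      by (intro view_cong) blast
    then have "relaxed_happy r \<psi> n inp (glue n s m plab mu) w \<longleftrightarrow>
        relaxed_happy r \<psi> n inp plab w"
      by (rule relaxed_happy_cong)
    then show ?thesis
      using acc w unfolding relaxed_accepts_def by blast
  qed
qed

lemma mend_via_window: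
  assumes vm: "verifier_mendable r \<psi> T"
    and acc: "relaxed_accepts r \<psi> n inp plab"
    and sv: "s \<le> v" "v < s + m" and sm: "s + m \<le> n"
    and far: "far_from_cuts n s m (r + r + k) (v - s)"
    and Tk: "T m \<le> real k"
  shows "\<exists>mu. is_mend r \<psi> n inp plab v (T m) mu"
proof -
  have "v - s < m"
    using sv by linarith
  then obtain mu where mu: "is_mend r \<psi> m (\<lambda>i. inp (s + i)) (window n s m plab) (v - s) (T m) mu"
    using vm relaxed_accepts_window[OF acc sm] unfolding verifier_mendable_def by blast
  have changes_near: "real (pdist i (v - s)) \<le> T m"
    if "i < m" "mu i \<noteq> window n s m plab i" for i
    using mu that unfolding is_mend_def by blast
  have changes_far: "far_from_cuts n s m (r + r) i"
    if "i < m" "mu i \<noteq> window n s m plab i" for i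
  proof -
    have "pdist i (v - s) \<le> k"
      using changes_near[OF that] Tk by linarith
    then show ?thesis
      using far_from_cuts_mono[of n s m "r + r" k "v - s" i] far by blast
  qed
  have v_far: "far_from_cuts n s m 0 (v - s)"
    using far_from_cuts_mono[of n s m 0 "r + r + k" "v - s" "v - s"] far by (simp add: pdist_def)
  have glue_v: "glue n s m plab mu v = mu (v - s)"
    using sv v_far by (simp add: glue_def)
  have mu_acc: "relaxed_accepts r \<psi> m (\<lambda>i. inp (s + i)) mu"
    and mu_v: "mu (v - s) \<noteq> None"
    and mu_none: "\<And>i. i < m \<Longrightarrow> mu i = None \<Longrightarrow> window n s m plab i = None"
    using mu unfolding is_mend_def by blast+
  have "is_mend r \<psi> n inp plab v (T m) (glue n s m plab mu)"
    unfolding is_mend_def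
  proof (intro conjI allI impI)
    show "relaxed_accepts r \<psi> n inp (glue n s m plab mu)"
      by (rule relaxed_accepts_glue[OF acc mu_acc sm changes_far])
    show "glue n s m plab mu v \<noteq> None"
      using mu_v glue_v by simp
  next
    fix u assume "u < n" "glue n s m plab mu u = None"
    show "plab u = None"
    proof (cases "glue n s m plab mu u = plab u")
      case False
      then have "s \<le> u" "u - s < m" "far_from_cuts n s m 0 (u - s)"
        using glue_changed by blast+
      moreover have "glue n s m plab mu u = mu (u - s)"
        using calculation by (auto simp: glue_def)
      ultimately have "window n s m plab (u - s) = None"
        using mu_none \<open>glue n s m plab mu u = None\<close> by simp
      with \<open>s \<le> u\<close> \<open>far_from_cuts n s m 0 (u - s)\<close> show ?thesis
        by (simp add: window_def)
    qed (use \<open>glue n s m plab mu u = None\<close> in simp)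
  next
    fix u assume "u < n" "glue n s m plab mu u \<noteq> plab u"
    then have "s \<le> u" "u - s < m" "mu (u - s) \<noteq> window n s m plab (u - s)"
      using glue_changed by blast+
    then have "real (pdist (u - s) (v - s)) \<le> T m"
      using changes_near by blast
    moreover have "pdist (u - s) (v - s) = pdist u v"
      using \<open>s \<le> u\<close> sv by (simp add: pdist_def)
    ultimately show "real (pdist u v) \<le> T m"
      by simp
  qed
  then show ?thesis by blast
qed

lemma obtain_window:
  assumes "2 * k + 3 \<le> m" "m \<le> n" "v < n"
  obtains s where "s \<le> v" "v < s + m" "s + m \<le> n" "far_from_cuts n s m k (v - s)"
proof
  let ?s = "min (v - (k + 1)) (n - m)"
  show "?s \<le> v" "v < ?s + m" "?s + m \<le> n" "far_from_cuts n ?s m k (v - ?s)"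
    using assms unfolding far_from_cuts_def by auto
qed

lemma is_mend_mono:
  "is_mend r \<psi> n inp plab v t mu \<Longrightarrow> t \<le> t' \<Longrightarrow> is_mend r \<psi> n inp plab v t' mu"
  unfolding is_mend_def by force

lemma is_mend_path_length:
  assumes "is_mend r \<psi> n inp plab v t mu" "v < n"
  shows "is_mend r \<psi> n inp plab v (real n) mu"
proof -
  have "pdist u v < n" if "u < n" for u
    using that assms(2) by (auto simp: pdist_def)
  then show ?thesis
    using assms(1) unfolding is_mend_def by (simp add: less_imp_le)
qed

lemma verifier_mendable_constant:
  assumes vm: "verifier_mendable r \<psi> T"
    and Tk: "T m \<le> real k" and km: "2 * (r + r + k) + 3 \<le> m"
  shows "verifier_mendable r \<psi> (\<lambda>_. real m)"
  unfolding verifier_mendable_def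
proof (intro allI impI)
  fix n inp plab v
  assume acc: "relaxed_accepts r \<psi> n inp plab" and v: "v < n"
  show "\<exists>mu. is_mend r \<psi> n inp plab v (real m) mu"
  proof (cases "m \<le> n")
    case True
    obtain s where "s \<le> v" "v < s + m" "s + m \<le> n" "far_from_cuts n s m (r + r + k) (v - s)"
      using obtain_window[OF km True v] .
    then obtain mu where mu: "is_mend r \<psi> n inp plab v (T m) mu"
      using mend_via_window[OF vm acc _ _ _ _ Tk] by blast
    have "real k \<le> real m"
      using km by simp
    then show ?thesis
      using is_mend_mono[OF mu] Tk by (meson order_trans)
  next
    case False
    obtain mu where "is_mend r \<psi> n inp plab v (T n) mu"
      using vm acc v unfolding verifier_mendable_def by blast
    then have "is_mend r \<psi> n inp plab v (real n) mu"
      using v by (rule is_mend_path_length)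
    then show ?thesis
      using False is_mend_mono[of r \<psi> n inp plab v "real n" mu "real m"] by auto
  qed
qed

lemma small_o_linear_margin:
  fixes T :: "nat \<Rightarrow> real"
  assumes "T \<in> o(\<lambda>n. real n)"
  shows "\<exists>m k. T m \<le> real k \<and> 2 * (c + k) + 3 \<le> m"
proof -
  have "eventually (\<lambda>n. norm (T n) \<le> 1/4 * norm (real n)) at_top"
    using landau_o.smallD[OF assms, of "1/4"] by simp
  then obtain N where N: "\<And>n. n \<ge> N \<Longrightarrow> \<bar>T n\<bar> \<le> real n / 4"
    unfolding eventually_at_top_linorder by auto
  define m where "m = max N (4 * c + 10)"
  define k where "k = nat \<lceil>T m\<rceil>"
  have "\<bar>T m\<bar> \<le> real m / 4" "4 * real c + 10 \<le> real m"
    using N[of m] unfolding m_def by auto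
  moreover have "T m \<le> real k" "real k \<le> \<bar>T m\<bar> + 1"
    unfolding k_def by linarith+
  ultimately have "real (2 * (c + k) + 3) \<le> real m"
    by simp
  then have "2 * (c + k) + 3 \<le> m"
    by (simp only: of_nat_le_iff)
  then show ?thesis
    using \<open>T m \<le> real k\<close> by blast
qed

theorem corollary8p3:
  fixes \<psi> :: "(int \<Rightarrow> ('i::finite \<times> 'o::finite) option) \<Rightarrow> bool"
    and r :: nat and T :: "nat \<Rightarrow> real"
  assumes "path_verifier r \<psi>"
    and "T \<in> o(\<lambda>n. real n)"
    and "lcl_mendable r \<psi> T"
  shows "\<exists>c::real. lcl_mendable r \<psi> (\<lambda>_. c)"
proof -
  obtain \<psi>' where pv: "path_verifier r \<psi>'"
    and same: "\<forall>n inp lab. accepts r \<psi>' n inp lab \<longleftrightarrow> accepts r \<psi> n inp lab"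
    and vm: "verifier_mendable r \<psi>' T"
    using assms(3) unfolding lcl_mendable_def by blast
  obtain m k where "T m \<le> real k" "2 * (r + r + k) + 3 \<le> m"
    using small_o_linear_margin[OF assms(2)] by blast
  then have "verifier_mendable r \<psi>' (\<lambda>_. real m)"
    by (rule verifier_mendable_constant[OF vm])
  then show ?thesis
    using pv same unfolding lcl_mendable_def by blast
qed

end
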